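(* Let $\gamma\in(-1,1)$ and consider the generalized Clegg integrator (GCI), i.e. the scalar reset system $\dot u_{ci}(t)=e(t)$ when $e(t)\neq 0$, and $u_{ci}(t^+)=\gamma\,u_{ci}(t)$ when $e(t)=0$, subject to the sinusoidal input $e(t)=|E_1|\sin(\omega t)$ with $\omega>0$, satisfying the open-loop stability assumption and the Zeno-free condition stated in the context. Then the steady-state output $u_{ci}(t)$ decomposes as $$u_{ci}(t)=u_i(t)+q_i(t),$$ where $u_i(t)=-|E_1/\omega|\,[\cos(\omega t)-1]$ is the base-linear (pure integrator) output and $q_i(t)$ is the $2\pi/\omega$-periodic square wave $$q_i(t)=\begin{cases}-2|E_1|\gamma(\gamma+1)^{-1}/\omega, & t\in[2k,2k+1)\cdot\pi/\omega,\\ -2|E_1|(\gamma+1)^{-1}/\omega, & t\in[2k+1,2k+2)\cdot\pi/\omega,\end{cases}\qquad k\in\mathbb{N}.$$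
   Context: A reset controller with state $x_c\in\mathbb{R}^{n_c}$, input $e$ and output $v$ is given by $\dot x_c=A_Rx_c+B_Re$ for $t\notin J$, $x_c(t^+)=A_\rho x_c(t)$ for $t\in J$, $v=C_Rx_c+D_Re$, where $J$ is the set of reset instants, i.e. the times at which the reset-triggering signal (here $e$) crosses zero. The GCI is the case $n_c=1$, $A_R=0$, $B_R=1$, $C_R=1$, $D_R=0$, $A_\rho=\gamma\in(-1,1)$. Open-loop stability assumption: $|\lambda(A_\rho e^{A_R\delta})|<1$ for all $\delta>0$ (for all eigenvalues $\lambda$), which guarantees a globally asymptotically stable $2\pi/\omega$-periodic (steady-state) solution. Zeno-free condition: the intervals $t_{i+1}-t_i$ between consecutive reset instants are bounded below by some $\sigma_{\min}>0$. *)

theory Defs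
  imports "HOL-Analysis.Analysis"
begin

definition gci_input :: "real \<Rightarrow> real \<Rightarrow> real \<Rightarrow> real" where
  "gci_input E1 \<omega> t = \<bar>E1\<bar> * sin (\<omega> * t)"

definition reset_instants :: "(real \<Rightarrow> real) \<Rightarrow> real set" where
  "reset_instants e = {t. 0 \<le> t \<and> e t = 0}"

definition zeno_free :: "(real \<Rightarrow> real) \<Rightarrow> bool" where
  "zeno_free e \<longleftrightarrow> (\<exists>\<sigma>>0. \<forall>t1\<in>reset_instants e. \<forall>t2\<in>reset_instants e.
       t1 < t2 \<longrightarrow> \<sigma> \<le> t2 - t1)"

text \<open>Solution of the GCI (A_R = 0, B_R = 1, C_R = 1, D_R = 0, A_rho = gamma) on t >= 0,
  with input e. Convention: x t is the post-reset (right-continuous) value; the pre-reset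
  value at a reset instant t is the left limit of x at t.\<close>
definition gci_solution :: "real \<Rightarrow> (real \<Rightarrow> real) \<Rightarrow> (real \<Rightarrow> real) \<Rightarrow> bool" where
  "gci_solution \<gamma> e x \<longleftrightarrow>
     (\<forall>t>0. e t \<noteq> 0 \<longrightarrow> (x has_real_derivative e t) (at t)) \<and>
     (\<forall>t\<ge>0. continuous (at_right t) x) \<and>
     (\<forall>t>0. e t = 0 \<longrightarrow> (\<exists>L. (x \<longlongrightarrow> L) (at_left t) \<and> x t = \<gamma> * L))"

definition periodic_on_nonneg :: "real \<Rightarrow> (real \<Rightarrow> real) \<Rightarrow> bool" where
  "periodic_on_nonneg T x \<longleftrightarrow> (\<forall>t\<ge>0. x (t + T) = x t)"

definition u_i :: "real \<Rightarrow> real \<Rightarrow> real \<Rightarrow> real" where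
  "u_i E1 \<omega> t = - \<bar>E1 / \<omega>\<bar> * (cos (\<omega> * t) - 1)"

text \<open>Square wave q_i (defined for t >= 0; value 0 elsewhere, never used).\<close>
definition q_i :: "real \<Rightarrow> real \<Rightarrow> real \<Rightarrow> real \<Rightarrow> real" where
  "q_i E1 \<gamma> \<omega> t =
     (if \<exists>k::nat. t \<in> {real (2*k) * pi / \<omega> ..< real (2*k+1) * pi / \<omega>}
      then - 2 * \<bar>E1\<bar> * \<gamma> / (\<gamma> + 1) / \<omega>
      else if \<exists>k::nat. t \<in> {real (2*k+1) * pi / \<omega> ..< real (2*k+2) * pi / \<omega>}
      then - 2 * \<bar>E1\<bar> / (\<gamma> + 1) / \<omega>
      else 0)"

end

theory Submission
  imports Defs
begin

text \<open>Between consecutive zeros k pi / omega of the input the GCI is a pure integrator, so on each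
  half period every solution differs from u_i by a constant. A 2 pi / omega-periodic solution
  is therefore determined by two constants c0, c1, and with D = 2 |E1| / omega, the rise of u_i
  over the first half period, the two resets per period demand D + c1 = gamma (D + c0) and
  c0 = gamma c1. For gamma different from 1 and -1 this linear system has the unique solution
  c0 = - D gamma / (gamma + 1), c1 = - D / (gamma + 1), which are the two levels of q_i.
  Conversely, u_i plus this staircase satisfies the reset law at every zero of the input.\<close>

lemma floor_divide_eq_iff:
  fixes p t :: real
  assumes "0 < p"
  shows "\<lfloor>t / p\<rfloor> = n \<longleftrightarrow> of_int n * p \<le> t \<and> t < (of_int n + 1) * p"
  using assms by (simp add: floor_eq_iff pos_le_divide_eq pos_divide_less_eq)

lemma eventually_floor_divide_at_right:
  fixes p t :: real
  assumes "0 < p"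
  shows "\<forall>\<^sub>F s in at_right t. \<lfloor>s / p\<rfloor> = \<lfloor>t / p\<rfloor>"
proof -
  have t: "of_int \<lfloor>t / p\<rfloor> * p \<le> t" "t < (of_int \<lfloor>t / p\<rfloor> + 1) * p"
    using floor_divide_eq_iff[OF assms, of t "\<lfloor>t / p\<rfloor>"] by simp_all
  from eventually_at_right_real[OF t(2)] show ?thesis
    by eventually_elim (use t(1) in \<open>auto simp: floor_divide_eq_iff[OF assms]\<close>)
qed

lemma eventually_floor_divide_at_left:
  fixes p :: real
  assumes "0 < p"
  shows "\<forall>\<^sub>F s in at_left (of_int n * p). \<lfloor>s / p\<rfloor> = n - 1"
proof -
  have "of_int (n - 1) * p < of_int n * p"
    using assms by simp
  from eventually_at_left_real[OF this] show ?thesis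
    by eventually_elim (use assms in \<open>auto simp: floor_divide_eq_iff[OF assms]\<close>)
qed

lemma eventually_floor_divide_at:
  fixes p t :: real
  assumes "t / p \<notin> \<int>"
  shows "\<forall>\<^sub>F s in at t. \<lfloor>s / p\<rfloor> = \<lfloor>t / p\<rfloor>"
proof (rule eventually_floor_eq[OF _ assms])
  have "p \<noteq> 0"
    using assms by auto
  then show "((\<lambda>s. s / p) \<longlongrightarrow> t / p) (at t)"
    by (intro tendsto_intros)
qed

lemma continuous_at_right_add_floor_step:
  fixes g :: "real \<Rightarrow> real" and c :: "int \<Rightarrow> real"
  assumes "0 < p" and "isCont g t"
  shows "continuous (at_right t) (\<lambda>s. g s + c \<lfloor>s / p\<rfloor>)"
proof -
  have "((\<lambda>s. g s + c \<lfloor>t / p\<rfloor>) \<longlongrightarrow> g t + c \<lfloor>t / p\<rfloor>) (at_right t)"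
    using assms(2) by (intro tendsto_intros) (simp add: isCont_def filterlim_at_split)
  moreover have "\<forall>\<^sub>F s in at_right t. g s + c \<lfloor>t / p\<rfloor> = g s + c \<lfloor>s / p\<rfloor>"
    using eventually_floor_divide_at_right[OF assms(1)] by (rule eventually_mono) simp
  ultimately show ?thesis
    unfolding continuous_within by (simp add: tendsto_cong)
qed

lemma tendsto_at_left_add_floor_step:
  fixes g :: "real \<Rightarrow> real" and c :: "int \<Rightarrow> real"
  assumes "0 < p" and "isCont g (of_int n * p)"
  shows "((\<lambda>s. g s + c \<lfloor>s / p\<rfloor>) \<longlongrightarrow> g (of_int n * p) + c (n - 1)) (at_left (of_int n * p))"
proof -
  have "((\<lambda>s. g s + c (n - 1)) \<longlongrightarrow> g (of_int n * p) + c (n - 1)) (at_left (of_int n * p))"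
    using assms(2) by (intro tendsto_intros) (simp add: isCont_def filterlim_at_split)
  moreover have "\<forall>\<^sub>F s in at_left (of_int n * p). g s + c (n - 1) = g s + c \<lfloor>s / p\<rfloor>"
    using eventually_floor_divide_at_left[OF assms(1)] by (rule eventually_mono) simp
  ultimately show ?thesis
    by (simp add: tendsto_cong)
qed

lemma has_real_derivative_add_floor_step:
  fixes g :: "real \<Rightarrow> real" and c :: "int \<Rightarrow> real"
  assumes "(g has_real_derivative D) (at t)" and "t / p \<notin> \<int>"
  shows "((\<lambda>s. g s + c \<lfloor>s / p\<rfloor>) has_real_derivative D) (at t)"
proof -
  have "((\<lambda>s. g s + c \<lfloor>t / p\<rfloor>) has_real_derivative D) (at t)"
    using assms(1) by (auto intro!: derivative_eq_intros)
  moreover have "\<forall>\<^sub>F s in at t. g s + c \<lfloor>t / p\<rfloor> = g s + c \<lfloor>s / p\<rfloor>"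
    using eventually_floor_divide_at[OF assms(2)] by (rule eventually_mono) simp
  ultimately show ?thesis
    by (simp add: has_field_derivative_cong_eventually)
qed

lemma eq_add_const_on_Ico:
  fixes x g g' :: "real \<Rightarrow> real"
  assumes "a < b"
    and dx: "\<And>t. t \<in> {a<..<b} \<Longrightarrow> (x has_real_derivative g' t) (at t)"
    and dg: "\<And>t. t \<in> {a<..<b} \<Longrightarrow> (g has_real_derivative g' t) (at t)"
    and cg: "continuous_on {a..b} g" and cx: "continuous (at_right a) x"
  obtains c where "\<And>t. t \<in> {a..<b} \<Longrightarrow> x t = g t + c"
    and "(x \<longlongrightarrow> g b + c) (at_left b)"
proof -
  have "((\<lambda>t. x t - g t) has_real_derivative 0) (at t within {a<..<b})" if "t \<in> {a<..<b}" for t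
    using DERIV_diff[OF dx[OF that] dg[OF that]] by (simp add: has_field_derivative_at_within)
  then obtain c where "\<forall>t\<in>{a<..<b}. x t - g t = c"
    using has_field_derivative_zero_constant[OF convex_real_interval(8)] by blast
  then have c: "x t = g t + c" if "t \<in> {a<..<b}" for t
    using that by (simp add: algebra_simps)
  have "((\<lambda>t. g t + c) \<longlongrightarrow> g a + c) (at_right a)"
    using continuous_on_Icc_at_rightD[OF cg \<open>a < b\<close>] by (intro tendsto_intros)
  moreover have "\<forall>\<^sub>F t in at_right a. g t + c = x t"
    using eventually_at_right_real[OF \<open>a < b\<close>] by (rule eventually_mono) (simp add: c)
  ultimately have "(x \<longlongrightarrow> g a + c) (at_right a)"
    by (simp add: tendsto_cong)
  then have "x a = g a + c"
    using cx unfolding continuous_within by (rule tendsto_unique[OF trivial_limit_at_right_real, rotated])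
  with c have "x t = g t + c" if "t \<in> {a..<b}" for t
    using that by (cases "t = a") auto
  moreover have "(x \<longlongrightarrow> g b + c) (at_left b)"
  proof -
    have "((\<lambda>t. g t + c) \<longlongrightarrow> g b + c) (at_left b)"
      using continuous_on_Icc_at_leftD[OF cg \<open>a < b\<close>] by (intro tendsto_intros)
    moreover have "\<forall>\<^sub>F t in at_left b. g t + c = x t"
      using eventually_at_left_real[OF \<open>a < b\<close>] by (rule eventually_mono) (simp add: c)
    ultimately show ?thesis
      by (simp add: tendsto_cong)
  qed
  ultimately show thesis
    using that by blast
qed

lemma periodic_on_nonneg_add_mult:
  assumes "periodic_on_nonneg T x" and "0 \<le> T" and "0 \<le> t"
  shows "x (t + of_nat m * T) = x t"
proof (induction m)
  case (Suc m)
  have "x (t + of_nat m * T + T) = x (t + of_nat m * T)"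
    using assms unfolding periodic_on_nonneg_def by simp
  then show ?case
    using Suc by (simp add: algebra_simps)
qed simp

lemma periodic_on_nonneg_eqI:
  assumes "periodic_on_nonneg T x" and "periodic_on_nonneg T y" and "0 < T"
    and "\<And>s. s \<in> {0..<T} \<Longrightarrow> x s = y s" and "0 \<le> t"
  shows "x t = y t"
proof -
  have "0 \<le> \<lfloor>t / T\<rfloor>"
    using assms(3,5) by simp
  then obtain m where m: "\<lfloor>t / T\<rfloor> = of_nat m"
    using nonneg_int_cases by blast
  define s where "s = t - of_nat m * T"
  have "s \<in> {0..<T}"
    using m unfolding floor_divide_eq_iff[OF \<open>0 < T\<close>] by (simp add: s_def algebra_simps)
  moreover have "t = s + of_nat m * T"
    by (simp add: s_def)
  ultimately show ?thesis
    using periodic_on_nonneg_add_mult[OF assms(1)] periodic_on_nonneg_add_mult[OF assms(2)] assms(3,4)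
    by simp
qed

lemma zeno_free_gci_input_imp_nonzero:
  assumes "zeno_free (gci_input E1 \<omega>)"
  shows "E1 \<noteq> 0"
proof
  assume "E1 = 0"
  then have "reset_instants (gci_input E1 \<omega>) = {0..}"
    unfolding reset_instants_def gci_input_def by auto
  with assms obtain \<sigma> :: real where "0 < \<sigma>" and "\<forall>t1\<in>{0..}. \<forall>t2\<in>{0..}. t1 < t2 \<longrightarrow> \<sigma> \<le> t2 - t1"
    unfolding zeno_free_def by auto
  from this(2)[rule_format, of 0 "\<sigma> / 2"] \<open>0 < \<sigma>\<close> show False
    by simp
qed

lemma gci_input_eq_0_iff:
  assumes "E1 \<noteq> 0" and "0 < \<omega>"
  shows "gci_input E1 \<omega> t = 0 \<longleftrightarrow> t / (pi / \<omega>) \<in> \<int>"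
proof -
  have "sin (\<omega> * t) = 0 \<longleftrightarrow> (\<exists>i::int. t / (pi / \<omega>) = of_int i)"
    unfolding sin_zero_iff_int2 using assms(2) by (auto simp: field_simps)
  then show ?thesis
    using assms(1) by (auto simp: gci_input_def Ints_def)
qed

lemma gci_input_nonzero_between_resets:
  assumes "E1 \<noteq> 0" and "0 < \<omega>"
    and "of_int n * (pi / \<omega>) < t" and "t < (of_int n + 1) * (pi / \<omega>)"
  shows "gci_input E1 \<omega> t \<noteq> 0"
proof
  assume "gci_input E1 \<omega> t = 0"
  then have "t / (pi / \<omega>) \<in> \<int>"
    by (simp add: gci_input_eq_0_iff[OF assms(1,2)])
  then obtain m :: int where "t / (pi / \<omega>) = of_int m"
    by (rule Ints_cases)
  moreover have "of_int n < t / (pi / \<omega>)" "t / (pi / \<omega>) < of_int n + 1"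
    using assms(2-4) by (simp_all add: pos_less_divide_eq pos_divide_less_eq)
  ultimately show False
    by simp
qed

lemma has_real_derivative_u_i:
  assumes "0 < \<omega>"
  shows "(u_i E1 \<omega> has_real_derivative gci_input E1 \<omega> t) (at t)"
  unfolding u_i_def[abs_def] gci_input_def
  by (rule derivative_eq_intros refl)+ (use assms in \<open>simp add: abs_divide\<close>)

lemma isCont_u_i: "isCont (u_i E1 \<omega>) t"
  unfolding u_i_def[abs_def] by (intro continuous_intros)

lemma u_i_at_reset:
  assumes "0 < \<omega>"
  shows "u_i E1 \<omega> (of_int n * (pi / \<omega>)) = (if even n then 0 else 2 * \<bar>E1\<bar> / \<omega>)"
proof -
  have "\<omega> * (of_int n * (pi / \<omega>)) = pi * of_int n"
    using assms by simp
  then have "cos (\<omega> * (of_int n * (pi / \<omega>))) = (if even n then 1 else -1)"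
    by simp
  then show ?thesis
    using assms by (simp add: u_i_def abs_divide)
qed

lemma u_i_periodic:
  assumes "0 < \<omega>"
  shows "u_i E1 \<omega> (t + 2 * pi / \<omega>) = u_i E1 \<omega> t"
proof -
  have "\<omega> * (t + 2 * pi / \<omega>) = \<omega> * t + 2 * pi"
    using assms by (simp add: field_simps)
  then show ?thesis
    by (simp add: u_i_def)
qed

definition q_level :: "real \<Rightarrow> real \<Rightarrow> real \<Rightarrow> int \<Rightarrow> real" where
  "q_level E1 \<gamma> \<omega> n =
     (if even n then - 2 * \<bar>E1\<bar> * \<gamma> / (\<gamma> + 1) / \<omega> else - 2 * \<bar>E1\<bar> / (\<gamma> + 1) / \<omega>)"

lemma q_level_add_2: "q_level E1 \<gamma> \<omega> (n + 2) = q_level E1 \<gamma> \<omega> n"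
  by (simp add: q_level_def)

lemma u_i_add_q_level_reset:
  assumes "0 < \<omega>" and "\<gamma> \<noteq> -1"
  shows "u_i E1 \<omega> (of_int n * (pi / \<omega>)) + q_level E1 \<gamma> \<omega> n
    = \<gamma> * (u_i E1 \<omega> (of_int n * (pi / \<omega>)) + q_level E1 \<gamma> \<omega> (n - 1))"
proof -
  define A where "A = 2 * \<bar>E1\<bar> / \<omega>"
  have "q_level E1 \<gamma> \<omega> m = (if even m then - A * \<gamma> / (\<gamma> + 1) else - A / (\<gamma> + 1))" for m
    by (simp add: q_level_def A_def)
  moreover have "u_i E1 \<omega> (of_int n * (pi / \<omega>)) = (if even n then 0 else A)"
    unfolding A_def by (rule u_i_at_reset[OF assms(1)])
  moreover have "\<gamma> + 1 \<noteq> 0"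
    using assms(2) by simp
  ultimately show ?thesis
    by (cases "even n") (simp_all add: field_simps)
qed

lemma q_i_eq_q_level:
  assumes "0 < \<omega>" and "0 \<le> t"
  shows "q_i E1 \<gamma> \<omega> t = q_level E1 \<gamma> \<omega> \<lfloor>t / (pi / \<omega>)\<rfloor>"
proof -
  have p: "0 < pi / \<omega>"
    using assms(1) by simp
  have Ico: "t \<in> {real j * pi / \<omega> ..< real (j + 1) * pi / \<omega>} \<longleftrightarrow> \<lfloor>t / (pi / \<omega>)\<rfloor> = int j" for j
    unfolding floor_divide_eq_iff[OF p] by (simp add: add.commute)
  define n where "n = \<lfloor>t / (pi / \<omega>)\<rfloor>"
  have "0 \<le> n"
    using assms by (simp add: n_def)
  have "(\<exists>k. t \<in> {real (2 * k) * pi / \<omega> ..< real (2 * k + 1) * pi / \<omega>}) \<longleftrightarrow> even n"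
    unfolding Ico n_def[symmetric] using \<open>0 \<le> n\<close>
    by (auto intro!: exI[of _ "nat (n div 2)"])
  moreover have "(\<exists>k. t \<in> {real (2 * k + 1) * pi / \<omega> ..< real (2 * k + 2) * pi / \<omega>}) \<longleftrightarrow> odd n"
  proof -
    have two: "2 * k + 2 = (2 * k + 1) + 1" for k :: nat
      by simp
    show ?thesis
      unfolding two Ico n_def[symmetric] using \<open>0 \<le> n\<close>
      by (auto intro!: exI[of _ "nat (n div 2)"]) (metis add.commute odd_two_times_div_two_succ)
  qed
  ultimately show ?thesis
    unfolding q_i_def q_level_def n_def[symmetric] by presburger
qed

definition gci_steady_state :: "real \<Rightarrow> real \<Rightarrow> real \<Rightarrow> real \<Rightarrow> real" where
  "gci_steady_state E1 \<gamma> \<omega> t = u_i E1 \<omega> t + q_level E1 \<gamma> \<omega> \<lfloor>t / (pi / \<omega>)\<rfloor>"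

lemma gci_solution_cong_nonneg:
  assumes eq: "\<And>t. 0 \<le> t \<Longrightarrow> x t = y t" and x: "gci_solution \<gamma> e x"
  shows "gci_solution \<gamma> e y"
  unfolding gci_solution_def
proof (intro conjI allI impI)
  fix t :: real
  assume "0 < t" "e t \<noteq> 0"
  have "\<forall>\<^sub>F s in nhds t. x s = y s"
    using eventually_nhds_in_open[OF open_greaterThan \<open>0 < t\<close>[folded greaterThan_iff]]
    by (rule eventually_mono) (simp add: eq)
  moreover have "(x has_real_derivative e t) (at t)"
    using x \<open>0 < t\<close> \<open>e t \<noteq> 0\<close> unfolding gci_solution_def by blast
  ultimately show "(y has_real_derivative e t) (at t)"
    using DERIV_cong_ev[OF refl _ refl] by blast
next
  fix t :: real
  assume "0 \<le> t"
  have "\<forall>\<^sub>F s in at_right t. x s = y s"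
    using eventually_at_right_less by (rule eventually_mono) (use \<open>0 \<le> t\<close> in \<open>auto intro: eq\<close>)
  moreover have "(x \<longlongrightarrow> x t) (at_right t)"
    using x \<open>0 \<le> t\<close> unfolding gci_solution_def continuous_within by blast
  ultimately show "continuous (at_right t) y"
    unfolding continuous_within using tendsto_cong eq[OF \<open>0 \<le> t\<close>] by metis
next
  fix t :: real
  assume "0 < t" "e t = 0"
  have "\<forall>\<^sub>F s in at_left t. x s = y s"
    using eventually_at_left_real[OF \<open>0 < t\<close>] by (rule eventually_mono) (simp add: eq)
  moreover obtain L where "(x \<longlongrightarrow> L) (at_left t)" "x t = \<gamma> * L"
    using x \<open>0 < t\<close> \<open>e t = 0\<close> unfolding gci_solution_def by blast
  ultimately show "\<exists>L. (y \<longlongrightarrow> L) (at_left t) \<and> y t = \<gamma> * L"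
    using tendsto_cong eq[of t] \<open>0 < t\<close> by (metis less_imp_le)
qed

lemma periodic_on_nonneg_cong:
  assumes "0 \<le> T" and "\<And>t. 0 \<le> t \<Longrightarrow> x t = y t" and "periodic_on_nonneg T x"
  shows "periodic_on_nonneg T y"
  using assms unfolding periodic_on_nonneg_def by simp

lemma gci_solution_steady_state:
  assumes "E1 \<noteq> 0" and "0 < \<omega>" and "\<gamma> \<noteq> -1"
  shows "gci_solution \<gamma> (gci_input E1 \<omega>) (gci_steady_state E1 \<gamma> \<omega>)"
  unfolding gci_solution_def
proof (intro conjI allI impI)
  have p: "0 < pi / \<omega>"
    using assms(2) by simp
  fix t :: real
  show "(gci_steady_state E1 \<gamma> \<omega> has_real_derivative gci_input E1 \<omega> t) (at t)"
    if "gci_input E1 \<omega> t \<noteq> 0"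
    unfolding gci_steady_state_def[abs_def]
    using that by (intro has_real_derivative_add_floor_step has_real_derivative_u_i[OF assms(2)])
      (simp add: gci_input_eq_0_iff[OF assms(1,2)])
  show "continuous (at_right t) (gci_steady_state E1 \<gamma> \<omega>)"
    unfolding gci_steady_state_def[abs_def]
    by (rule continuous_at_right_add_floor_step[OF p isCont_u_i])
  show "\<exists>L. (gci_steady_state E1 \<gamma> \<omega> \<longlongrightarrow> L) (at_left t) \<and> gci_steady_state E1 \<gamma> \<omega> t = \<gamma> * L"
    if "gci_input E1 \<omega> t = 0"
  proof -
    from that have "t / (pi / \<omega>) \<in> \<int>"
      by (simp add: gci_input_eq_0_iff[OF assms(1,2)])
    then obtain n :: int where n: "t / (pi / \<omega>) = of_int n"
      by (rule Ints_cases)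
    then have t: "t = of_int n * (pi / \<omega>)"
      using assms(2) by (simp add: field_simps)
    have "(gci_steady_state E1 \<gamma> \<omega> \<longlongrightarrow> u_i E1 \<omega> t + q_level E1 \<gamma> \<omega> (n - 1)) (at_left t)"
      unfolding gci_steady_state_def[abs_def] t
      by (rule tendsto_at_left_add_floor_step[OF p isCont_u_i])
    moreover have "gci_steady_state E1 \<gamma> \<omega> t = \<gamma> * (u_i E1 \<omega> t + q_level E1 \<gamma> \<omega> (n - 1))"
    proof -
      have "\<lfloor>t / (pi / \<omega>)\<rfloor> = n"
        unfolding n by (rule floor_of_int)
      then have "gci_steady_state E1 \<gamma> \<omega> t = u_i E1 \<omega> t + q_level E1 \<gamma> \<omega> n"
        by (simp only: gci_steady_state_def)
      also have "\<dots> = \<gamma> * (u_i E1 \<omega> t + q_level E1 \<gamma> \<omega> (n - 1))"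
        unfolding t by (rule u_i_add_q_level_reset[OF assms(2,3)])
      finally show ?thesis .
    qed
    ultimately show ?thesis
      by blast
  qed
qed

lemma periodic_gci_steady_state:
  assumes "0 < \<omega>"
  shows "periodic_on_nonneg (2 * pi / \<omega>) (gci_steady_state E1 \<gamma> \<omega>)"
  unfolding periodic_on_nonneg_def
proof (intro allI impI)
  fix t :: real
  have "(t + 2 * pi / \<omega>) / (pi / \<omega>) = t / (pi / \<omega>) + 2"
    using assms by (simp add: field_simps)
  then have "\<lfloor>(t + 2 * pi / \<omega>) / (pi / \<omega>)\<rfloor> = \<lfloor>t / (pi / \<omega>)\<rfloor> + 2"
    by simp
  then show "gci_steady_state E1 \<gamma> \<omega> (t + 2 * pi / \<omega>) = gci_steady_state E1 \<gamma> \<omega> t"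
    unfolding gci_steady_state_def u_i_periodic[OF assms] by (simp only: q_level_add_2)
qed

lemma gci_solution_between_resets:
  assumes x: "gci_solution \<gamma> (gci_input E1 \<omega>) x" and "0 < \<omega>" and "0 \<le> a" and "a < b"
    and nz: "\<And>t. t \<in> {a<..<b} \<Longrightarrow> gci_input E1 \<omega> t \<noteq> 0"
  obtains c where "\<And>t. t \<in> {a..<b} \<Longrightarrow> x t = u_i E1 \<omega> t + c"
    and "(x \<longlongrightarrow> u_i E1 \<omega> b + c) (at_left b)"
proof -
  have dx: "(x has_real_derivative gci_input E1 \<omega> t) (at t)" if "t \<in> {a<..<b}" for t
    using x nz[OF that] that \<open>0 \<le> a\<close> unfolding gci_solution_def by auto
  have cx: "continuous (at_right a) x"
    using x \<open>0 \<le> a\<close> unfolding gci_solution_def by blast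
  have cu: "continuous_on {a..b} (u_i E1 \<omega>)"
    by (intro continuous_at_imp_continuous_on ballI isCont_u_i)
  show thesis
    using eq_add_const_on_Ico[OF \<open>a < b\<close> dx has_real_derivative_u_i[OF \<open>0 < \<omega>\<close>] cu cx] that
    by blast
qed

lemma gci_solution_reset:
  assumes "gci_solution \<gamma> e x" and "0 < t" and "e t = 0" and "(x \<longlongrightarrow> L) (at_left t)"
  shows "x t = \<gamma> * L"
proof -
  obtain L' where "(x \<longlongrightarrow> L') (at_left t)" "x t = \<gamma> * L'"
    using assms(1-3) unfolding gci_solution_def by blast
  moreover have "L' = L"
    using tendsto_unique[OF trivial_limit_at_left_real] calculation(1) assms(4) by blast
  ultimately show ?thesis
    by simp
qed

lemma reset_fixed_point:
  fixes D c0 c1 \<gamma> :: real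
  assumes "D + c1 = \<gamma> * (D + c0)" and "c0 = \<gamma> * c1" and "\<gamma> \<noteq> 1" and "\<gamma> \<noteq> -1"
  shows "c0 = - D * \<gamma> / (\<gamma> + 1)" and "c1 = - D / (\<gamma> + 1)"
proof -
  have "(1 - \<gamma>) * ((\<gamma> + 1) * c1 + D) = 0"
    using assms(1,2) by (simp add: algebra_simps)
  with assms(3) have "(\<gamma> + 1) * c1 = - D"
    by simp
  with assms(4) show "c1 = - D / (\<gamma> + 1)"
    by (simp add: field_simps)
  with assms(2) show "c0 = - D * \<gamma> / (\<gamma> + 1)"
    by simp
qed

lemma gci_periodic_solution_levels:
  assumes x: "gci_solution \<gamma> (gci_input E1 \<omega>) x" and per: "periodic_on_nonneg (2 * pi / \<omega>) x"
    and E1: "E1 \<noteq> 0" and \<omega>: "0 < \<omega>"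
  obtains c0 c1 where "\<And>s. s \<in> {0..<pi / \<omega>} \<Longrightarrow> x s = u_i E1 \<omega> s + c0"
    and "\<And>s. s \<in> {pi / \<omega>..<2 * pi / \<omega>} \<Longrightarrow> x s = u_i E1 \<omega> s + c1"
    and "2 * \<bar>E1\<bar> / \<omega> + c1 = \<gamma> * (2 * \<bar>E1\<bar> / \<omega> + c0)" and "c0 = \<gamma> * c1"
proof -
  define p where "p = pi / \<omega>"
  define D where "D = 2 * \<bar>E1\<bar> / \<omega>"
  have p: "0 < p"
    using \<omega> by (simp add: p_def)
  have T: "2 * pi / \<omega> = 2 * p"
    by (simp add: p_def)
  have at_p: "u_i E1 \<omega> (of_int n * p) = (if even n then 0 else D)" for n
    unfolding p_def D_def by (rule u_i_at_reset[OF \<omega>])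
  have u: "u_i E1 \<omega> 0 = 0" "u_i E1 \<omega> p = D" "u_i E1 \<omega> (2 * p) = 0"
    using at_p[of 0] at_p[of 1] at_p[of 2] by simp_all
  have resets: "gci_input E1 \<omega> p = 0" "gci_input E1 \<omega> (2 * p) = 0"
    unfolding gci_input_eq_0_iff[OF E1 \<omega>] p_def[symmetric] using p by simp_all
  have nz: "gci_input E1 \<omega> s \<noteq> 0" if "s \<in> {of_int n * p<..<(of_int n + 1) * p}" for s n
    using that unfolding p_def by (intro gci_input_nonzero_between_resets[OF E1 \<omega>]) auto
  obtain c0 where c0: "\<And>s. s \<in> {0..<p} \<Longrightarrow> x s = u_i E1 \<omega> s + c0"
    and l0: "(x \<longlongrightarrow> D + c0) (at_left p)"
    using gci_solution_between_resets[OF x \<omega> order_refl p] nz[of _ 0] u by auto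
  obtain c1 where c1: "\<And>s. s \<in> {p..<2 * p} \<Longrightarrow> x s = u_i E1 \<omega> s + c1"
    and l1: "(x \<longlongrightarrow> c1) (at_left (2 * p))"
    using gci_solution_between_resets[OF x \<omega>, of p "2 * p"] nz[of _ 1] u p by auto
  have "D + c1 = \<gamma> * (D + c0)"
    using gci_solution_reset[OF x _ resets(1) l0] c1[of p] u p by simp
  moreover have "c0 = \<gamma> * c1"
  proof -
    have "x (2 * p) = \<gamma> * c1"
      using gci_solution_reset[OF x _ resets(2) l1] p by simp
    moreover have "x (2 * p) = x 0"
      using per[unfolded periodic_on_nonneg_def T, rule_format, of 0] by simp
    ultimately show ?thesis
      using c0[of 0] u p by simp
  qed
  ultimately show thesis
    using that c0 c1 unfolding p_def D_def T[unfolded p_def, symmetric] by blast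
qed

lemma gci_periodic_solution_unique:
  assumes x: "gci_solution \<gamma> (gci_input E1 \<omega>) x" and per: "periodic_on_nonneg (2 * pi / \<omega>) x"
    and E1: "E1 \<noteq> 0" and \<omega>: "0 < \<omega>" and "\<gamma> \<noteq> 1" and "\<gamma> \<noteq> -1" and "0 \<le> t"
  shows "x t = gci_steady_state E1 \<gamma> \<omega> t"
proof -
  obtain c0 c1 where c0: "\<And>s. s \<in> {0..<pi / \<omega>} \<Longrightarrow> x s = u_i E1 \<omega> s + c0"
    and c1: "\<And>s. s \<in> {pi / \<omega>..<2 * pi / \<omega>} \<Longrightarrow> x s = u_i E1 \<omega> s + c1"
    and "2 * \<bar>E1\<bar> / \<omega> + c1 = \<gamma> * (2 * \<bar>E1\<bar> / \<omega> + c0)" and "c0 = \<gamma> * c1"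
    using gci_periodic_solution_levels[OF x per E1 \<omega>] by metis
  then have "c0 = - (2 * \<bar>E1\<bar> / \<omega>) * \<gamma> / (\<gamma> + 1)" "c1 = - (2 * \<bar>E1\<bar> / \<omega>) / (\<gamma> + 1)"
    using reset_fixed_point assms(5,6) by blast+
  then have q: "c0 = q_level E1 \<gamma> \<omega> 0" "c1 = q_level E1 \<gamma> \<omega> 1"
    by (simp_all add: q_level_def)
  have p: "0 < pi / \<omega>"
    using \<omega> by simp
  have first_period: "x s = gci_steady_state E1 \<gamma> \<omega> s" if "s \<in> {0..<2 * pi / \<omega>}" for s
  proof (cases "s < pi / \<omega>")
    case True
    then have "\<lfloor>s / (pi / \<omega>)\<rfloor> = 0"
      using that unfolding floor_divide_eq_iff[OF p] by simp
    with True that show ?thesis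
      using c0[of s] q(1) by (simp add: gci_steady_state_def)
  next
    case False
    then have "\<lfloor>s / (pi / \<omega>)\<rfloor> = 1"
      using that unfolding floor_divide_eq_iff[OF p] by simp
    with False that show ?thesis
      using c1[of s] q(2) by (simp add: gci_steady_state_def)
  qed
  have "0 < 2 * pi / \<omega>"
    using \<omega> by simp
  with per periodic_gci_steady_state[OF \<omega>] show ?thesis
    using first_period \<open>0 \<le> t\<close> by (rule periodic_on_nonneg_eqI)
qed

theorem lemma1:
  fixes \<gamma> \<omega> E1 :: real
  assumes "-1 < \<gamma>" and "\<gamma> < 1" and "0 < \<omega>"
    and "\<forall>\<delta>>0. \<bar>\<gamma> * exp (0 * \<delta>)\<bar> < 1"
    and "zeno_free (gci_input E1 \<omega>)"
  shows "gci_solution \<gamma> (gci_input E1 \<omega>) (\<lambda>t. u_i E1 \<omega> t + q_i E1 \<gamma> \<omega> t)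
       \<and> periodic_on_nonneg (2 * pi / \<omega>) (\<lambda>t. u_i E1 \<omega> t + q_i E1 \<gamma> \<omega> t)
       \<and> (\<forall>x. gci_solution \<gamma> (gci_input E1 \<omega>) x \<and> periodic_on_nonneg (2 * pi / \<omega>) x
              \<longrightarrow> (\<forall>t\<ge>0. x t = u_i E1 \<omega> t + q_i E1 \<gamma> \<omega> t))"
proof -
  have E1: "E1 \<noteq> 0"
    using assms(5) by (rule zeno_free_gci_input_imp_nonzero)
  have \<gamma>: "\<gamma> \<noteq> 1" "\<gamma> \<noteq> -1"
    using assms(1,2) by simp_all
  have steady: "gci_steady_state E1 \<gamma> \<omega> t = u_i E1 \<omega> t + q_i E1 \<gamma> \<omega> t" if "0 \<le> t" for t
    using q_i_eq_q_level[OF assms(3) that] by (simp add: gci_steady_state_def)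
  have "gci_solution \<gamma> (gci_input E1 \<omega>) (\<lambda>t. u_i E1 \<omega> t + q_i E1 \<gamma> \<omega> t)"
    by (rule gci_solution_cong_nonneg[OF steady gci_solution_steady_state[OF E1 assms(3) \<gamma>(2)]])
  moreover have "periodic_on_nonneg (2 * pi / \<omega>) (\<lambda>t. u_i E1 \<omega> t + q_i E1 \<gamma> \<omega> t)"
    by (rule periodic_on_nonneg_cong[OF _ steady periodic_gci_steady_state[OF assms(3)]])
      (use assms(3) in simp)
  moreover have "x t = u_i E1 \<omega> t + q_i E1 \<gamma> \<omega> t"
    if "gci_solution \<gamma> (gci_input E1 \<omega>) x" "periodic_on_nonneg (2 * pi / \<omega>) x" "0 \<le> t" for x t
    using gci_periodic_solution_unique[OF that(1,2) E1 assms(3) \<gamma> that(3)] steady[OF that(3)]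
    by (rule trans)
  ultimately show ?thesis
    by blast
qed

end
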